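(* There is no circulant weighing matrix $CW(154,81)$.
   Context: A circulant weighing matrix $CW(n,k)$ is an $n\times n$ circulant matrix $W$ (each row after the first is the right cyclic shift of the previous row) with all entries in $\{0,1,-1\}$ such that $WW^T=kI_n$. *)

theory Defs
  imports Main
begin

text \<open>An n x n matrix is represented as a function nat => nat => int, indices in {0..<n}.\<close>

definition circulant :: "nat \<Rightarrow> (nat \<Rightarrow> nat \<Rightarrow> int) \<Rightarrow> bool" where
  "circulant n W \<longleftrightarrow>
     (\<forall>i<n. \<forall>j<n. W i j = W 0 (nat ((int j - int i) mod int n)))"

definition circulant_weighing_matrix :: "nat \<Rightarrow> nat \<Rightarrow> (nat \<Rightarrow> nat \<Rightarrow> int) \<Rightarrow> bool" where
  "circulant_weighing_matrix n k W \<longleftrightarrow>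
     circulant n W \<and>
     (\<forall>i<n. \<forall>j<n. W i j \<in> {0, 1, -1}) \<and>
     (\<forall>i<n. \<forall>j<n. (\<Sum>l<n. W i l * W j l) = (if i = j then int k else 0))"

end

theory Submission
  imports Defs "HOL-Computational_Algebra.Polynomial"
begin

text \<open>
  Identify the first row of a circulant weighing matrix \<open>CW(n, k)\<close> with an element \<open>P\<close>
  of the group ring \<open>\<int>[x]/(x^n - 1)\<close> of the cyclic group of order \<open>n\<close>; then
  \<open>W W^T = k I\<close> says \<open>P(x) P(x^-1) = k\<close>. For \<open>CW(154, 81)\<close>, folding to
  \<open>\<int>[x]/(x^77 - 1)\<close> gives an element \<open>E\<close> with coefficients in \<open>[-2, 2]\<close> and
  \<open>E(x) E(x^-1) = 3^4\<close>. As \<open>3^30 = 1 (mod 77)\<close>, working modulo the ideals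
  \<open>(3^k, x^77 - 1)\<close> shows that \<open>3\<close> is a multiplier: \<open>E(x^3) = x^s E(x)\<close>, and after a
  translation \<open>E(x^3) = E(x)\<close>. The coefficients of \<open>E\<close> are then constant on the orbits
  of \<open>j \<mapsto> 3 j\<close> on \<open>\<int>/77\<close>, of sizes 1, 6, 5, 5, 30, 30. The sums of squares of the
  coefficients of \<open>E\<close> and of its image in \<open>\<int>[x]/(x^11 - 1)\<close> both equal 81, which gives
  two quadratic equations in six integers of absolute value at most 2 without a solution.
\<close>

section \<open>Congruences modulo \<open>x^m - 1\<close>\<close>

definition cong_cyc :: "nat \<Rightarrow> 'a::comm_ring_1 poly \<Rightarrow> 'a poly \<Rightarrow> bool" where
  "cong_cyc m p q \<longleftrightarrow> (monom 1 m - 1) dvd (p - q)"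

lemma cong_cyc_refl [simp]: "cong_cyc m p p"
  by (simp add: cong_cyc_def)

lemma cong_cyc_sym: "cong_cyc m p q \<Longrightarrow> cong_cyc m q p"
  unfolding cong_cyc_def by (metis dvd_minus_iff minus_diff_eq)

lemma cong_cyc_trans [trans]: "cong_cyc m p q \<Longrightarrow> cong_cyc m q r \<Longrightarrow> cong_cyc m p r"
proof -
  assume "cong_cyc m p q" "cong_cyc m q r"
  moreover have "p - r = (p - q) + (q - r)" by simp
  ultimately show ?thesis unfolding cong_cyc_def by (metis dvd_add)
qed

lemma cong_cyc_add: "cong_cyc m p q \<Longrightarrow> cong_cyc m p' q' \<Longrightarrow> cong_cyc m (p + p') (q + q')"
  unfolding cong_cyc_def by (simp add: add_diff_add dvd_add)

lemma cong_cyc_diff: "cong_cyc m p q \<Longrightarrow> cong_cyc m p' q' \<Longrightarrow> cong_cyc m (p - p') (q - q')"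
proof -
  assume "cong_cyc m p q" "cong_cyc m p' q'"
  moreover have "p - p' - (q - q') = (p - q) - (p' - q')" by (simp add: algebra_simps)
  ultimately show ?thesis unfolding cong_cyc_def by (metis dvd_diff)
qed

lemma cong_cyc_mult: "cong_cyc m p q \<Longrightarrow> cong_cyc m p' q' \<Longrightarrow> cong_cyc m (p * p') (q * q')"
proof -
  assume "cong_cyc m p q" "cong_cyc m p' q'"
  moreover have "p * p' - q * q' = (p - q) * p' + q * (p' - q')"
    by (simp add: algebra_simps)
  ultimately show ?thesis
    unfolding cong_cyc_def by (metis dvd_add dvd_mult dvd_mult2)
qed

lemma cong_cyc_mult_left: "cong_cyc m p q \<Longrightarrow> cong_cyc m (r * p) (r * q)"
  by (rule cong_cyc_mult[OF cong_cyc_refl])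

lemma cong_cyc_mult_right: "cong_cyc m p q \<Longrightarrow> cong_cyc m (p * r) (q * r)"
  by (rule cong_cyc_mult[OF _ cong_cyc_refl])

lemma cong_cyc_smult: "cong_cyc m p q \<Longrightarrow> cong_cyc m (smult c p) (smult c q)"
  unfolding cong_cyc_def by (metis dvd_smult smult_diff_right)

lemma cong_cyc_sum:
  "(\<And>i. i \<in> A \<Longrightarrow> cong_cyc m (f i) (g i)) \<Longrightarrow> cong_cyc m (\<Sum>i\<in>A. f i) (\<Sum>i\<in>A. g i)"
  by (induction A rule: infinite_finite_induct) (auto intro: cong_cyc_add)

lemma cong_cyc_modulus_dvd:
  assumes "d dvd m" "cong_cyc m p q"
  shows "cong_cyc d p q"
proof -
  obtain t where "m = d * t" using assms(1) by blast
  then have "monom 1 m - 1 = (monom 1 d) ^ t - (1 :: 'a poly)"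
    by (simp add: monom_power)
  then have "(monom 1 d - 1) dvd (monom 1 m - (1 :: 'a poly))"
    by (metis power_diff_1_eq dvd_triv_left)
  then show ?thesis using assms(2) unfolding cong_cyc_def by (rule dvd_trans)
qed

lemma cong_cyc_monom_exp:
  assumes "i mod m = j mod m"
  shows "cong_cyc m (monom c i) (monom c j)"
proof -
  have "cong_cyc m (monom c (k + m * t)) (monom c k)" for k t
  proof -
    have "cong_cyc (m * t) (monom 1 (m * t)) 1"
      unfolding cong_cyc_def by simp
    then have "cong_cyc m (monom 1 (m * t)) 1"
      by (rule cong_cyc_modulus_dvd[rotated]) simp
    then have "cong_cyc m (monom c k * monom 1 (m * t)) (monom c k * 1)"
      by (rule cong_cyc_mult_left)
    then show ?thesis by (simp add: mult_monom)
  qed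
  from this[of "i mod m" "i div m"] this[of "j mod m" "j div m"]
  have "cong_cyc m (monom c i) (monom c (i mod m))" "cong_cyc m (monom c j) (monom c (j mod m))"
    by simp_all
  then show ?thesis using assms by (metis cong_cyc_sym cong_cyc_trans)
qed

lemma poly_1_eq_if_cong_cyc: "cong_cyc m p q \<Longrightarrow> poly p 1 = poly q 1"
proof -
  assume "cong_cyc m p q"
  then obtain r where "p - q = (monom 1 m - 1) * r" unfolding cong_cyc_def by (rule dvdE)
  then have "poly (p - q) 1 = 0" by (simp add: poly_monom)
  then show ?thesis by simp
qed

lemma degree_xm_minus_1: "m > 0 \<Longrightarrow> degree (monom 1 m - 1 :: 'a::idom poly) = m"
  using degree_add_eq_left[of "-1" "monom 1 m :: 'a poly"] by (simp add: degree_monom_eq)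

lemma lead_coeff_xm_minus_1: "m > 0 \<Longrightarrow> lead_coeff (monom 1 m - 1 :: 'a::idom poly) = 1"
  by (simp add: degree_xm_minus_1)

lemma cong_cyc_smult_cancel:
  fixes p q :: "'a::idom poly"
  assumes "m > 0" "c \<noteq> 0" "cong_cyc m (smult c p) (smult c q)"
  shows "cong_cyc m p q"
  using assms dvd_monic[OF lead_coeff_xm_minus_1[OF assms(1)], of c "p - q"]
  unfolding cong_cyc_def by (simp add: smult_diff_right)

definition poly_of_coeffs :: "nat \<Rightarrow> (nat \<Rightarrow> 'a::comm_ring_1) \<Rightarrow> 'a poly" where
  "poly_of_coeffs m a = (\<Sum>i<m. monom (a i) i)"

lemma coeff_poly_of_coeffs: "coeff (poly_of_coeffs m a) j = (if j < m then a j else 0)"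
  unfolding poly_of_coeffs_def by (simp add: coeff_sum)

lemma poly_of_coeffs_coeff: "degree p < m \<Longrightarrow> poly_of_coeffs m (coeff p) = p"
  by (rule poly_eqI) (auto simp: coeff_poly_of_coeffs coeff_eq_0)

lemma degree_poly_of_coeffs_less: "m > 0 \<Longrightarrow> degree (poly_of_coeffs m a) < m"
proof -
  assume "m > 0"
  have "degree (poly_of_coeffs m a) \<le> m - 1"
    by (rule degree_le) (auto simp: coeff_poly_of_coeffs)
  with \<open>m > 0\<close> show ?thesis by linarith
qed

lemma poly_of_coeffs_eq_monom:
  assumes "s < m" "\<And>l. l < m \<Longrightarrow> l \<noteq> s \<Longrightarrow> a l = 0"
  shows "poly_of_coeffs m a = monom (a s) s"
  by (rule poly_eqI) (use assms in \<open>auto simp: coeff_poly_of_coeffs coeff_monom\<close>)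

lemma cong_cyc_poly_of_coeffs_ex:
  fixes p :: "'a::idom poly"
  assumes "m > 0"
  shows "\<exists>a. cong_cyc m p (poly_of_coeffs m a)"
proof -
  define d :: "'a poly" where "d = monom 1 m - 1"
  have d: "lead_coeff d = 1" "degree d = m"
    using assms lead_coeff_xm_minus_1 degree_xm_minus_1 unfolding d_def by blast+
  then have "d \<noteq> 0" by auto
  obtain q r where qr: "pseudo_divmod p d = (q, r)" by fastforce
  from pseudo_divmod[OF \<open>d \<noteq> 0\<close> qr] d(1) have "p = d * q + r" "r = 0 \<or> degree r < m"
    by (simp_all add: d(2))
  then have "cong_cyc m p r" "degree r < m"
    using assms by (auto simp: cong_cyc_def d_def)
  then show ?thesis by (metis poly_of_coeffs_coeff)
qed

lemma cong_cyc_poly_of_coeffs_eq: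
  fixes a b :: "nat \<Rightarrow> 'a::idom"
  assumes "m > 0" "cong_cyc m (poly_of_coeffs m a) (poly_of_coeffs m b)" "j < m"
  shows "a j = b j"
proof -
  let ?r = "poly_of_coeffs m a - poly_of_coeffs m b"
  have "degree ?r < m"
    by (intro degree_diff_less degree_poly_of_coeffs_less assms(1))
  moreover have "degree (monom 1 m - 1 :: 'a poly) \<le> degree ?r" if "?r \<noteq> 0"
    using assms(2) that unfolding cong_cyc_def by (rule dvd_imp_degree_le)
  ultimately have "?r = 0"
    using degree_xm_minus_1[OF assms(1), where 'a = 'a] by linarith
  then show ?thesis
    by (metis assms(3) coeff_poly_of_coeffs eq_iff_diff_eq_0)
qed

lemma cong_cyc_fold:
  "cong_cyc m (poly_of_coeffs (d * m) a) (poly_of_coeffs m (\<lambda>r. \<Sum>t<d. a (r + t * m)))"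
proof -
  have "poly_of_coeffs (d * m) a = (\<Sum>t<d. \<Sum>r<m. monom (a (r + t * m)) (r + t * m))"
  proof -
    have "poly_of_coeffs (d * m) a = (\<Sum>t<d. \<Sum>i\<in>{t * m..<t * m + m}. monom (a i) i)"
      unfolding poly_of_coeffs_def
      using sum.nat_group[where g = "\<lambda>i. monom (a i) i" and k = m and n = d]
      by (simp only: mult.commute[of d m])
    also have "\<dots> = (\<Sum>t<d. \<Sum>r<m. monom (a (r + t * m)) (r + t * m))"
    proof (rule sum.cong[OF refl])
      fix t
      have "{t * m..<t * m + m} = {0 + t * m..<m + t * m}" by (simp add: add.commute)
      then show "(\<Sum>i\<in>{t * m..<t * m + m}. monom (a i) i) = (\<Sum>r<m. monom (a (r + t * m)) (r + t * m))"
        by (simp only: sum.shift_bounds_nat_ivl lessThan_atLeast0)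
    qed
    finally show ?thesis .
  qed
  also have "cong_cyc m \<dots> (\<Sum>t<d. \<Sum>r<m. monom (a (r + t * m)) r)"
    by (intro cong_cyc_sum cong_cyc_monom_exp) simp
  also have "(\<Sum>t<d. \<Sum>r<m. monom (a (r + t * m)) r) = poly_of_coeffs m (\<lambda>r. \<Sum>t<d. a (r + t * m))"
    unfolding poly_of_coeffs_def by (subst sum.swap) (simp add: monom_sum)
  finally show ?thesis .
qed

lemma mod_add_inverse_cancel:
  fixes c c' i m :: nat
  assumes "(c + c') mod m = 0"
  shows "((i + c) mod m + c') mod m = i mod m"
proof -
  have "((i + c) mod m + c') mod m = (i + (c + c')) mod m"
    by (simp add: mod_add_left_eq add.assoc)
  also have "\<dots> = i mod m"
    using assms by (metis mod_add_right_eq add_0_right)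
  finally show ?thesis .
qed

lemma cong_cyc_rotate:
  assumes "m > 0" "(c + c') mod m = 0"
  shows "cong_cyc m (monom 1 c * poly_of_coeffs m a) (poly_of_coeffs m (\<lambda>j. a ((j + c') mod m)))"
proof -
  have "(c' + c) mod m = 0"
    using assms(2) by (simp add: add.commute)
  then have inv: "((i + c) mod m + c') mod m = i" "((i + c') mod m + c) mod m = i" if "i < m" for i
    using that mod_add_inverse_cancel[OF assms(2), of i] mod_add_inverse_cancel[of c' c m i]
    by simp_all
  have "monom 1 c * poly_of_coeffs m a = (\<Sum>i<m. monom (a i) (i + c))"
    unfolding poly_of_coeffs_def by (simp add: sum_distrib_left mult_monom add.commute)
  also have "cong_cyc m \<dots> (\<Sum>i<m. monom (a i) ((i + c) mod m))"
    by (intro cong_cyc_sum cong_cyc_monom_exp) simp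
  also have "\<dots> = poly_of_coeffs m (\<lambda>j. a ((j + c') mod m))"
    unfolding poly_of_coeffs_def
    by (rule sum.reindex_bij_witness[where i = "\<lambda>j. (j + c') mod m" and j = "\<lambda>i. (i + c) mod m"])
       (use assms(1) in \<open>auto simp: inv\<close>)
  finally show ?thesis .
qed

section \<open>Dilations and the norm\<close>

definition dilate :: "nat \<Rightarrow> 'a::comm_semiring_1 poly \<Rightarrow> 'a poly" where
  "dilate t p = p \<circ>\<^sub>p monom 1 t"

lemma pcompose_power_left: "(p ^ k) \<circ>\<^sub>p q = (p \<circ>\<^sub>p q) ^ k"
  for p q :: "'a::comm_semiring_1 poly"
  by (induction k) (simp_all add: pcompose_mult pcompose_1)

lemma dilate_mult: "dilate t (p * q) = dilate t p * dilate t q"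
  by (simp add: dilate_def pcompose_mult)

lemma dilate_diff: "dilate t (p - q) = dilate t p - dilate t q"
  for p q :: "'a::comm_ring_1 poly"
  by (simp add: dilate_def pcompose_diff)

lemma dilate_smult: "dilate t (smult c p) = smult c (dilate t p)"
  by (simp add: dilate_def pcompose_smult)

lemma dilate_const [simp]: "dilate t [:c:] = [:c:]"
  by (simp add: dilate_def)

lemma dilate_0 [simp]: "dilate t 0 = 0"
  by (simp add: dilate_def)

lemma dilate_1 [simp]: "dilate t 1 = 1"
  by (simp add: dilate_def pcompose_1)

lemma dilate_power: "dilate t (p ^ k) = dilate t p ^ k"
  by (simp add: dilate_def pcompose_power_left)

lemma dilate_sum: "dilate t (\<Sum>i\<in>A. f i) = (\<Sum>i\<in>A. dilate t (f i))"
  by (simp add: dilate_def pcompose_sum)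

lemma dilate_monom: "dilate t (monom c k) = monom c (k * t)"
proof -
  have "dilate t (monom c k) = smult c (monom 1 t ^ k)"
    by (simp add: dilate_def monom_altdef[of c] pcompose_smult pcompose_power_left pcompose_pCons)
  then show ?thesis by (simp add: monom_power smult_monom mult.commute)
qed

lemma dilate_dilate: "dilate s (dilate t p) = dilate (t * s) p"
  by (simp add: dilate_def pcompose_assoc[symmetric] dilate_monom[unfolded dilate_def])

lemma dilate_Suc_0 [simp]: "dilate (Suc 0) p = p"
  by (simp add: dilate_def monom_Suc one_pCons)

lemma poly_dilate_1: "poly (dilate t p) 1 = poly p 1"
  by (simp add: dilate_def poly_pcompose poly_monom)

lemma cong_cyc_dilate: "cong_cyc m p q \<Longrightarrow> cong_cyc m (dilate t p) (dilate t q)"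
proof -
  assume "cong_cyc m p q"
  then obtain r where r: "p - q = (monom 1 m - 1) * r"
    unfolding cong_cyc_def by (rule dvdE)
  have "cong_cyc m (monom 1 (m * t)) (monom 1 0)"
    by (rule cong_cyc_monom_exp) simp
  then have "cong_cyc m ((monom 1 (m * t) - 1) * dilate t r) ((1 - 1) * dilate t r)"
    by (intro cong_cyc_mult_right cong_cyc_diff) (simp_all add: monom_0 one_pCons)
  then have "cong_cyc m (dilate t (p - q)) 0"
    by (simp add: r dilate_mult dilate_diff dilate_monom)
  then show ?thesis by (simp add: cong_cyc_def dilate_diff)
qed

lemma cong_cyc_dilate_exp:
  assumes "s mod m = t mod m"
  shows "cong_cyc m (dilate s p) (dilate t p)"
proof -
  have "dilate s p = (\<Sum>i\<le>degree p. monom (coeff p i) (i * s))"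
    by (subst (1) poly_as_sum_of_monoms[symmetric]) (simp add: dilate_sum dilate_monom)
  also have "cong_cyc m \<dots> (\<Sum>i\<le>degree p. monom (coeff p i) (i * t))"
    using assms by (intro cong_cyc_sum cong_cyc_monom_exp) (metis mod_mult_right_eq)
  also have "\<dots> = dilate t p"
    by (subst (2) poly_as_sum_of_monoms[symmetric]) (simp add: dilate_sum dilate_monom)
  finally show ?thesis .
qed

lemma mod_mult_inverse_cancel:
  fixes t t' i m :: nat
  assumes "t * t' mod m = 1 mod m"
  shows "t' * (t * i mod m) mod m = i mod m"
proof -
  have "t' * (t * i mod m) mod m = (t * t') * i mod m"
    by (simp add: mod_mult_right_eq ac_simps)
  also have "\<dots> = (t * t' mod m) * i mod m"
    by (simp add: mod_mult_left_eq)
  finally show ?thesis using assms by (simp add: mod_mult_left_eq)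
qed

lemma cong_cyc_dilate_poly_of_coeffs:
  assumes "m > 0" "t * t' mod m = 1 mod m"
  shows "cong_cyc m (dilate t (poly_of_coeffs m a)) (poly_of_coeffs m (\<lambda>j. a (t' * j mod m)))"
proof -
  have inv: "t' * (t * i mod m) mod m = i" "t * (t' * i mod m) mod m = i" if "i < m" for i
    using that mod_mult_inverse_cancel[OF assms(2)] mod_mult_inverse_cancel[of t' t m]
      assms(2) by (simp_all add: mult.commute)
  have "dilate t (poly_of_coeffs m a) = (\<Sum>i<m. monom (a i) (i * t))"
    by (simp add: poly_of_coeffs_def dilate_sum dilate_monom)
  also have "cong_cyc m \<dots> (\<Sum>i<m. monom (a i) (t * i mod m))"
    by (intro cong_cyc_sum cong_cyc_monom_exp) (simp add: mult.commute)
  also have "\<dots> = poly_of_coeffs m (\<lambda>j. a (t' * j mod m))"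
    unfolding poly_of_coeffs_def
    by (rule sum.reindex_bij_witness[where i = "\<lambda>j. t' * j mod m" and j = "\<lambda>i. t * i mod m"])
       (use assms(1) in \<open>auto simp: inv\<close>)
  finally show ?thesis .
qed

lemma dilate_invariant_coeffs:
  fixes f :: "nat \<Rightarrow> 'a::idom"
  assumes "m > 0" "t * t' mod m = 1 mod m"
    and "cong_cyc m (dilate t (poly_of_coeffs m f)) (poly_of_coeffs m f)" "j < m"
  shows "f (t' * j mod m) = f j"
proof -
  have "cong_cyc m (poly_of_coeffs m (\<lambda>j. f (t' * j mod m))) (poly_of_coeffs m f)"
    using cong_cyc_sym[OF cong_cyc_dilate_poly_of_coeffs[OF assms(1,2)]] assms(3)
    by (rule cong_cyc_trans)
  from cong_cyc_poly_of_coeffs_eq[OF assms(1) this assms(4)] show ?thesis .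
qed

text \<open>\<open>dilate (m - 1)\<close> is the involution \<open>x \<mapsto> x^-1\<close> of \<open>\<int>[x]/(x^m - 1)\<close>.\<close>

definition cyc_norm :: "nat \<Rightarrow> 'a::comm_semiring_1 poly \<Rightarrow> 'a poly" where
  "cyc_norm m p = p * dilate (m - 1) p"

lemma cong_cyc_cyc_norm: "cong_cyc m p q \<Longrightarrow> cong_cyc m (cyc_norm m p) (cyc_norm m q)"
  unfolding cyc_norm_def by (intro cong_cyc_mult cong_cyc_dilate)

lemma cyc_norm_mult: "cyc_norm m (p * q) = cyc_norm m p * cyc_norm m q"
  by (simp add: cyc_norm_def dilate_mult ac_simps)

lemma cyc_norm_smult: "cyc_norm m (smult c p) = smult (c * c) (cyc_norm m p)"
  by (simp add: cyc_norm_def dilate_smult)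

lemma cyc_norm_dilate: "cyc_norm m (dilate t p) = dilate t (cyc_norm m p)"
  by (simp add: cyc_norm_def dilate_mult dilate_dilate mult.commute)

lemma poly_cyc_norm_1: "poly (cyc_norm m p) 1 = poly p 1 * poly p 1"
  by (simp add: cyc_norm_def poly_dilate_1)

lemma cong_cyc_cyc_norm_monom:
  assumes "m > 0"
  shows "cong_cyc m (cyc_norm m (monom 1 c)) 1"
proof -
  have "cyc_norm m (monom 1 c) = monom 1 (m * c)"
    using assms by (simp add: cyc_norm_def dilate_monom mult_monom algebra_simps)
  also have "cong_cyc m \<dots> (monom 1 0)"
    by (rule cong_cyc_monom_exp) simp
  finally show ?thesis by (simp add: monom_0 one_pCons)
qed

lemma cong_cyc_cyc_norm_translate:
  assumes "m > 0"
  shows "cong_cyc m (cyc_norm m (monom 1 c * E)) (cyc_norm m E)"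
  using cong_cyc_mult_right[OF cong_cyc_cyc_norm_monom[OF assms], of c "cyc_norm m E"]
  by (simp add: cyc_norm_mult)

section \<open>Periodic autocorrelation and circulant matrices\<close>

definition periodic_autocorrelation :: "nat \<Rightarrow> (nat \<Rightarrow> 'a::comm_ring_1) \<Rightarrow> nat \<Rightarrow> 'a" where
  "periodic_autocorrelation m a j = (\<Sum>l<m. a l * a (nat ((int l - int j) mod int m)))"

lemma cong_cyc_cyc_norm_autocorrelation:
  assumes "m > 0"
  shows "cong_cyc m (cyc_norm m (poly_of_coeffs m a)) (poly_of_coeffs m (periodic_autocorrelation m a))"
proof -
  define d where "d i l = nat ((int i - int l) mod int m)" for i l
  have d_less: "d i l < m" for i l
    using assms by (simp add: d_def nat_less_iff)
  have int_d: "int (d i l) = (int i - int l) mod int m" for i l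
    using assms by (simp add: d_def)
  have d_d: "d i (d i l) = l" if "l < m" for i l
  proof -
    have "int (d i (d i l)) = (int i - (int i - int l) mod int m) mod int m"
      by (simp add: int_d)
    also have "\<dots> = int l"
      using that by (simp add: mod_diff_right_eq)
    finally show ?thesis by simp
  qed
  have d_exp: "(i + l * (m - 1)) mod m = d i l" for i l
  proof -
    have "int ((i + l * (m - 1)) mod m) = (int i + int l * (int m - 1)) mod int m"
      using assms by (simp add: of_nat_mod of_nat_diff)
    also have "\<dots> = ((int i - int l) + int l * int m) mod int m"
      by (simp add: algebra_simps)
    also have "\<dots> = int (d i l)"
      by (simp add: int_d)
    finally show ?thesis by simp
  qed
  have "cyc_norm m (poly_of_coeffs m a) = (\<Sum>i<m. \<Sum>l<m. monom (a i * a l) (i + l * (m - 1)))"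
    by (simp add: cyc_norm_def poly_of_coeffs_def dilate_sum dilate_monom sum_product mult_monom)
  also have "cong_cyc m \<dots> (\<Sum>i<m. \<Sum>l<m. monom (a i * a l) (d i l))"
    by (intro cong_cyc_sum cong_cyc_monom_exp) (simp only: d_exp mod_less[OF d_less])
  also have "\<dots> = (\<Sum>i<m. \<Sum>j<m. monom (a i * a (d i j)) j)"
  proof (rule sum.cong[OF refl])
    fix i
    show "(\<Sum>l<m. monom (a i * a l) (d i l)) = (\<Sum>j<m. monom (a i * a (d i j)) j)"
      by (rule sum.reindex_bij_witness[where i = "d i" and j = "d i"]) (auto simp: d_d d_less)
  qed
  also have "\<dots> = poly_of_coeffs m (periodic_autocorrelation m a)"
    unfolding poly_of_coeffs_def periodic_autocorrelation_def d_def
    by (subst sum.swap) (simp add: monom_sum)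
  finally show ?thesis .
qed

lemma poly_of_coeffs_delta: "m > 0 \<Longrightarrow> poly_of_coeffs m (\<lambda>j. if j = 0 then c else 0) = [:c:]"
  by (subst poly_of_coeffs_eq_monom[of 0]) (simp_all add: monom_0)

lemma sum_squares_eq_if_cyc_norm_cong:
  fixes a :: "nat \<Rightarrow> 'a::idom"
  assumes "m > 0" "cong_cyc m (cyc_norm m (poly_of_coeffs m a)) [:c:]"
  shows "(\<Sum>l<m. a l * a l) = c"
proof -
  have "cong_cyc m (poly_of_coeffs m (periodic_autocorrelation m a)) (cyc_norm m (poly_of_coeffs m a))"
    by (rule cong_cyc_sym[OF cong_cyc_cyc_norm_autocorrelation[OF assms(1)]])
  also note assms(2)
  also have "[:c:] = poly_of_coeffs m (\<lambda>j. if j = 0 then c else 0)"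
    by (rule poly_of_coeffs_delta[OF assms(1), symmetric])
  finally have "cong_cyc m (poly_of_coeffs m (periodic_autocorrelation m a))
                           (poly_of_coeffs m (\<lambda>j. if j = 0 then c else 0))" .
  from cong_cyc_poly_of_coeffs_eq[OF assms(1) this, of 0] assms(1)
  have "periodic_autocorrelation m a 0 = c" by simp
  moreover have "periodic_autocorrelation m a 0 = (\<Sum>l<m. a l * a l)"
    unfolding periodic_autocorrelation_def by (intro sum.cong) simp_all
  ultimately show ?thesis by simp
qed

lemma cong_cyc_cyc_norm_modulus_dvd:
  assumes "m dvd n" "m > 0" "n > 0" "cong_cyc n (cyc_norm n P) R" "cong_cyc m P Q"
  shows "cong_cyc m (cyc_norm m Q) R"
proof -
  obtain m' where m: "m = Suc m'" using assms(2) by (cases m) simp_all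
  obtain t where t: "n = m * t" using assms(1) by blast
  with assms(3) have "t \<noteq> 0" by (intro notI) simp
  then obtain t' where "t = Suc t'" using not0_implies_Suc by blast
  with t m have n1: "n - 1 = m' + t' * m" by simp
  have exp: "(m - 1) mod m = (n - 1) mod m"
    unfolding n1 m by (simp only: mod_mult_self1 diff_Suc_1)
  have "cong_cyc m (cyc_norm m Q) (cyc_norm m P)"
    using assms(5) by (intro cong_cyc_cyc_norm) (rule cong_cyc_sym)
  also have "cong_cyc m \<dots> (cyc_norm n P)"
    unfolding cyc_norm_def using exp by (intro cong_cyc_mult_left cong_cyc_dilate_exp)
  also have "cong_cyc m \<dots> R"
    using assms(1,4) by (rule cong_cyc_modulus_dvd)
  finally show ?thesis .
qed

lemma sum_squares_eq_1_int:
  fixes u :: "nat \<Rightarrow> int"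
  assumes "(\<Sum>l<n. u l * u l) = 1"
  shows "\<exists>s<n. (u s = 1 \<or> u s = -1) \<and> (\<forall>l<n. l \<noteq> s \<longrightarrow> u l = 0)"
proof -
  have "\<exists>s<n. u s \<noteq> 0"
  proof (rule ccontr)
    assume "\<not> (\<exists>s<n. u s \<noteq> 0)"
    then have "(\<Sum>l<n. u l * u l) = 0" by simp
    with assms show False by simp
  qed
  then obtain s where s: "s < n" "u s \<noteq> 0" by blast
  have split: "(\<Sum>l<n. u l * u l) = u s * u s + (\<Sum>l\<in>{..<n} - {s}. u l * u l)"
    using s(1) by (simp add: sum.remove)
  have rest: "(\<Sum>l\<in>{..<n} - {s}. u l * u l) \<ge> 0"
    by (rule sum_nonneg) simp
  have "u s * u s > 0"
    using s(2) by (auto simp: zero_less_mult_iff)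
  then have "u s * u s = 1" "(\<Sum>l\<in>{..<n} - {s}. u l * u l) = 0"
    using split rest assms by linarith+
  then have "u s = 1 \<or> u s = -1" "\<forall>l<n. l \<noteq> s \<longrightarrow> u l = 0"
    by (simp_all add: zmult_eq_1_iff sum_nonneg_eq_0_iff)
  with s(1) show ?thesis by blast
qed

lemma cyc_norm_one_imp_cong_cyc_monom:
  fixes U :: "int poly"
  assumes "m > 0" "cong_cyc m (cyc_norm m U) 1"
  shows "\<exists>\<sigma> s. (\<sigma> = 1 \<or> \<sigma> = -1) \<and> s < m \<and> cong_cyc m U (monom \<sigma> s)"
proof -
  obtain u where u: "cong_cyc m U (poly_of_coeffs m u)"
    using cong_cyc_poly_of_coeffs_ex[OF assms(1)] by blast
  have "cong_cyc m (cyc_norm m (poly_of_coeffs m u)) (cyc_norm m U)"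
    using u by (intro cong_cyc_cyc_norm) (rule cong_cyc_sym)
  also note assms(2)
  finally have "(\<Sum>l<m. u l * u l) = 1"
    using sum_squares_eq_if_cyc_norm_cong[OF assms(1), of u 1] by (simp add: one_pCons)
  then obtain s where s: "s < m" "u s = 1 \<or> u s = -1" "\<forall>l<m. l \<noteq> s \<longrightarrow> u l = 0"
    using sum_squares_eq_1_int by blast
  then have "poly_of_coeffs m u = monom (u s) s"
    by (intro poly_of_coeffs_eq_monom) auto
  with u s(1,2) show ?thesis by auto
qed

lemma circulant_weighing_matrix_cyc_norm:
  assumes "circulant_weighing_matrix n k W" "n > 0"
  shows "cong_cyc n (cyc_norm n (poly_of_coeffs n (W 0))) [:int k:]"
proof -
  have circ: "W j l = W 0 (nat ((int l - int j) mod int n))" if "j < n" "l < n" for j l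
    using assms(1) that unfolding circulant_weighing_matrix_def circulant_def by blast
  have orth: "(\<Sum>l<n. W 0 l * W j l) = (if 0 = j then int k else 0)" if "j < n" for j
    using assms that unfolding circulant_weighing_matrix_def by blast
  have "periodic_autocorrelation n (W 0) j = (if j = 0 then int k else 0)" if "j < n" for j
  proof -
    have "periodic_autocorrelation n (W 0) j = (\<Sum>l<n. W 0 l * W j l)"
      unfolding periodic_autocorrelation_def using circ[OF that] by (intro sum.cong) simp_all
    with orth[OF that] show ?thesis by auto
  qed
  then have "poly_of_coeffs n (periodic_autocorrelation n (W 0)) = [:int k:]"
    using assms(2) by (subst poly_of_coeffs_eq_monom[of 0]) (simp_all add: monom_0)
  then show ?thesis
    using cong_cyc_cyc_norm_autocorrelation[OF assms(2), of "W 0"] by simp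
qed

lemma circulant_weighing_matrix_fold:
  assumes "circulant_weighing_matrix (d * m) k W" "d > 0" "m > 0"
  shows "cong_cyc m (cyc_norm m (poly_of_coeffs m (\<lambda>j. \<Sum>t<d. W 0 (j + t * m)))) [:int k:]"
    and "\<forall>j<m. \<bar>\<Sum>t<d. W 0 (j + t * m)\<bar> \<le> int d"
proof -
  show "cong_cyc m (cyc_norm m (poly_of_coeffs m (\<lambda>j. \<Sum>t<d. W 0 (j + t * m)))) [:int k:]"
    using assms by (intro cong_cyc_cyc_norm_modulus_dvd[of m "d * m", OF _ _ _
          circulant_weighing_matrix_cyc_norm[OF assms(1)] cong_cyc_fold]) simp_all
  have entry: "\<bar>W 0 (j + t * m)\<bar> \<le> 1" if "j < m" "t < d" for j t
  proof -
    have "j + t * m < d * m"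
      using that by (metis add_mult_distrib mult_Suc less_le_trans add_less_mono1 mult_le_mono1 Suc_leI)
    then show ?thesis
      using assms(1) unfolding circulant_weighing_matrix_def by fastforce
  qed
  show "\<forall>j<m. \<bar>\<Sum>t<d. W 0 (j + t * m)\<bar> \<le> int d"
  proof (intro allI impI)
    fix j assume "j < m"
    then have "\<bar>\<Sum>t<d. W 0 (j + t * m)\<bar> \<le> (\<Sum>t<d. 1)"
      by (intro order_trans[OF sum_abs sum_mono]) (simp add: entry)
    then show "\<bar>\<Sum>t<d. W 0 (j + t * m)\<bar> \<le> int d"
      by simp
  qed
qed

section \<open>Congruences modulo \<open>(3^k, x^m - 1)\<close>\<close>

definition cong_pow3 :: "nat \<Rightarrow> nat \<Rightarrow> int poly \<Rightarrow> int poly \<Rightarrow> bool" where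
  "cong_pow3 m k p q \<longleftrightarrow> (\<exists>r. cong_cyc m (p - q) (smult (3 ^ k) r))"

lemma cong_pow3_0 [simp]: "cong_pow3 m 0 p q"
  unfolding cong_pow3_def by (rule exI[of _ "p - q"]) simp

lemma cong_pow3_if_cong_cyc: "cong_cyc m p q \<Longrightarrow> cong_pow3 m k p q"
  unfolding cong_pow3_def cong_cyc_def by (rule exI[of _ 0]) simp

lemma cong_pow3_refl [simp]: "cong_pow3 m k p p"
  by (simp add: cong_pow3_if_cong_cyc)

lemma cong_pow3_add:
  assumes "cong_pow3 m k p q" "cong_pow3 m k p' q'"
  shows "cong_pow3 m k (p + p') (q + q')"
proof -
  obtain r r' where "cong_cyc m (p - q) (smult (3 ^ k) r)" "cong_cyc m (p' - q') (smult (3 ^ k) r')"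
    using assms unfolding cong_pow3_def by blast
  then have "cong_cyc m ((p - q) + (p' - q')) (smult (3 ^ k) (r + r'))"
    by (simp add: cong_cyc_add smult_add_right)
  then show ?thesis
    unfolding cong_pow3_def by (auto simp: algebra_simps)
qed

lemma cong_pow3_uminus: "cong_pow3 m k p q \<Longrightarrow> cong_pow3 m k (- p) (- q)"
proof -
  assume "cong_pow3 m k p q"
  then obtain r where "cong_cyc m (p - q) (smult (3 ^ k) r)"
    unfolding cong_pow3_def by blast
  then have "cong_cyc m (smult (-1) (p - q)) (smult (-1) (smult (3 ^ k) r))"
    by (rule cong_cyc_smult)
  then have "cong_cyc m (- p - - q) (smult (3 ^ k) (- r))"
    by simp
  then show ?thesis
    unfolding cong_pow3_def by blast
qed

lemma cong_pow3_diff: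
  "cong_pow3 m k p q \<Longrightarrow> cong_pow3 m k p' q' \<Longrightarrow> cong_pow3 m k (p - p') (q - q')"
  using cong_pow3_add[of m k p q "- p'" "- q'"] cong_pow3_uminus by simp

lemma cong_pow3_sym: "cong_pow3 m k p q \<Longrightarrow> cong_pow3 m k q p"
  using cong_pow3_add[OF cong_pow3_uminus cong_pow3_refl, of m k p q "p + q"]
  by (simp add: algebra_simps)

lemma cong_pow3_trans [trans]: "cong_pow3 m k p q \<Longrightarrow> cong_pow3 m k q r \<Longrightarrow> cong_pow3 m k p r"
  using cong_pow3_add[of m k p q q r] cong_pow3_diff[of m k "p + q" "q + r" q q] by simp

lemma cong_pow3_mult_zero:
  assumes "cong_pow3 m j p 0" "cong_pow3 m k q 0"
  shows "cong_pow3 m (j + k) (p * q) 0"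
proof -
  obtain r s where r: "cong_cyc m p (smult (3 ^ j) r)" and s: "cong_cyc m q (smult (3 ^ k) s)"
    using assms unfolding cong_pow3_def by auto
  have "cong_cyc m (p * q) (smult (3 ^ j) r * smult (3 ^ k) s)"
    using r s by (rule cong_cyc_mult)
  then show ?thesis
    unfolding cong_pow3_def by (auto simp: power_add mult.commute)
qed

lemma cong_pow3_mult_left: "cong_pow3 m k p q \<Longrightarrow> cong_pow3 m k (r * p) (r * q)"
proof -
  assume "cong_pow3 m k p q"
  then obtain s where "cong_cyc m (p - q) (smult (3 ^ k) s)"
    unfolding cong_pow3_def by blast
  then have "cong_cyc m (r * (p - q)) (r * smult (3 ^ k) s)"
    by (rule cong_cyc_mult_left)
  then have "cong_cyc m (r * p - r * q) (smult (3 ^ k) (r * s))"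
    by (simp add: algebra_simps)
  then show ?thesis
    unfolding cong_pow3_def by blast
qed

lemma cong_pow3_mult_right: "cong_pow3 m k p q \<Longrightarrow> cong_pow3 m k (p * r) (q * r)"
  using cong_pow3_mult_left[of m k p q r] by (simp add: mult.commute)

lemma cong_pow3_mult:
  "cong_pow3 m k p q \<Longrightarrow> cong_pow3 m k p' q' \<Longrightarrow> cong_pow3 m k (p * p') (q * q')"
  using cong_pow3_mult_right[of m k p q p'] cong_pow3_mult_left[of m k p' q' q]
  by (rule cong_pow3_trans)

lemma cong_pow3_power: "cong_pow3 m k p q \<Longrightarrow> cong_pow3 m k (p ^ n) (q ^ n)"
  by (induction n) (simp_all add: cong_pow3_mult)

lemma cong_pow3_mono: "j \<le> k \<Longrightarrow> cong_pow3 m k p q \<Longrightarrow> cong_pow3 m j p q"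
proof -
  assume "j \<le> k" "cong_pow3 m k p q"
  then obtain r where "cong_cyc m (p - q) (smult (3 ^ k) r)"
    unfolding cong_pow3_def by blast
  moreover have "smult ((3::int) ^ k) r = smult (3 ^ j) (smult (3 ^ (k - j)) r)"
    using \<open>j \<le> k\<close> by (simp add: power_add[symmetric])
  ultimately have "cong_cyc m (p - q) (smult (3 ^ j) (smult (3 ^ (k - j)) r))"
    by simp
  then show ?thesis
    unfolding cong_pow3_def by blast
qed

lemma cong_pow3_smult3: "cong_pow3 m k p q \<Longrightarrow> cong_pow3 m (Suc k) (smult 3 p) (smult 3 q)"
proof -
  assume "cong_pow3 m k p q"
  then obtain r where "cong_cyc m (p - q) (smult (3 ^ k) r)"
    unfolding cong_pow3_def by blast
  then have "cong_cyc m (smult 3 (p - q)) (smult 3 (smult (3 ^ k) r))"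
    by (rule cong_cyc_smult)
  then show ?thesis
    unfolding cong_pow3_def by (auto simp: smult_diff_right)
qed

lemma cong_pow3_smult3_cancel:
  assumes "m > 0" "cong_pow3 m (Suc k) (smult 3 p) (smult 3 q)"
  shows "cong_pow3 m k p q"
proof -
  obtain r where "cong_cyc m (smult 3 p - smult 3 q) (smult (3 ^ Suc k) r)"
    using assms(2) unfolding cong_pow3_def by blast
  then have "cong_cyc m (smult 3 (p - q)) (smult 3 (smult (3 ^ k) r))"
    by (simp add: smult_diff_right)
  then have "cong_cyc m (p - q) (smult (3 ^ k) r)"
    by (rule cong_cyc_smult_cancel[OF assms(1), rotated]) simp
  then show ?thesis
    unfolding cong_pow3_def by blast
qed

lemma cong_pow3_diff_0_iff: "cong_pow3 m k (p - q) 0 \<longleftrightarrow> cong_pow3 m k p q"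
  by (simp add: cong_pow3_def)

lemma cong_pow3_smult3_0: "cong_pow3 m 1 (smult 3 p) 0"
  using cong_pow3_smult3[OF cong_pow3_0, of m p 0] by simp

lemma smult_3_int_poly: "smult 3 p = 3 * (p :: int poly)"
  by (simp add: numeral_poly)

lemma cong_pow3_cube:
  assumes "k \<ge> 1" "cong_pow3 m k a b"
  shows "cong_pow3 m (Suc k) (a ^ 3) (b ^ 3)"
proof -
  define t where "t = a - b"
  have t: "cong_pow3 m k t 0"
    using assms(2) by (simp add: t_def cong_pow3_diff_0_iff)
  have eq: "a ^ 3 - b ^ 3 = smult 3 (b * b * t + b * t * t) + t * t * t"
    unfolding smult_3_int_poly t_def by algebra
  have "cong_pow3 m k (b * b * t + b * t * t) 0"
    using cong_pow3_add[OF cong_pow3_mult_left[OF t, of "b * b"] cong_pow3_mult_left[OF t, of "b * t"]]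
    by simp
  then have "cong_pow3 m (Suc k) (smult 3 (b * b * t + b * t * t)) 0"
    using cong_pow3_smult3 by fastforce
  moreover have "cong_pow3 m (k + k + k) (t * t * t) 0"
    by (intro cong_pow3_mult_zero t)
  then have "cong_pow3 m (Suc k) (t * t * t) 0"
    by (rule cong_pow3_mono[rotated]) (use assms(1) in simp)
  ultimately have "cong_pow3 m (Suc k) (a ^ 3 - b ^ 3) 0"
    unfolding eq using cong_pow3_add by fastforce
  then show ?thesis
    by (rule cong_pow3_diff_0_iff[THEN iffD1])
qed

lemma cong_pow3_pow3: "cong_pow3 m 1 a b \<Longrightarrow> cong_pow3 m (Suc j) (a ^ 3 ^ j) (b ^ 3 ^ j)"
proof (induction j)
  case (Suc j)
  then have "cong_pow3 m (Suc (Suc j)) ((a ^ 3 ^ j) ^ 3) ((b ^ 3 ^ j) ^ 3)"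
    by (intro cong_pow3_cube) simp_all
  then show ?case
    by (simp add: power_mult[symmetric] mult.commute)
qed simp

lemma cong_pow3_cube_add: "cong_pow3 m 1 ((p + q) ^ 3) (p ^ 3 + q ^ 3)"
proof -
  have "(p + q) ^ 3 - (p ^ 3 + q ^ 3) = smult 3 (p\<^sup>2 * q + p * q\<^sup>2)"
    unfolding smult_3_int_poly by algebra
  then have "cong_pow3 m 1 ((p + q) ^ 3 - (p ^ 3 + q ^ 3)) 0"
    by (simp only: cong_pow3_smult3_0)
  then show ?thesis
    by (rule cong_pow3_diff_0_iff[THEN iffD1])
qed

lemma int_cube_mod_3: "(c :: int) ^ 3 mod 3 = c mod 3"
proof -
  have "c mod 3 \<in> {0, 1, 2}" by auto
  then have "(c mod 3) ^ 3 mod 3 = c mod 3" by auto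
  then show ?thesis by (simp add: power_mod)
qed

lemma cong_pow3_const_cube: "cong_pow3 m 1 [:c ^ 3:] [:c:]"
proof -
  obtain d where "c ^ 3 - c = 3 * d"
    using int_cube_mod_3[of c] by (metis dvd_def mod_eq_dvd_iff)
  then have eq: "[:c ^ 3:] - [:c:] = smult 3 [:d:]"
    by (simp add: diff_pCons)
  have "cong_pow3 m 1 ([:c ^ 3:] - [:c:]) 0"
    unfolding eq by (rule cong_pow3_smult3_0)
  then show ?thesis
    by (rule cong_pow3_diff_0_iff[THEN iffD1])
qed

lemma cong_pow3_dilate3: "cong_pow3 m 1 (dilate 3 p) (p ^ 3)"
proof (induction p)
  case (pCons a p)
  have x: "pCons a p = [:a:] + monom 1 1 * p"
    by (rule poly_eqI) (simp add: coeff_pCons coeff_monom_mult split: nat.split)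
  have "dilate 3 (pCons a p) = [:a:] + monom 1 3 * dilate 3 p"
    by (simp add: dilate_def pcompose_pCons)
  also have "cong_pow3 m 1 \<dots> ([:a ^ 3:] + monom 1 3 * p ^ 3)"
    by (intro cong_pow3_add cong_pow3_mult_left pCons.IH cong_pow3_sym[OF cong_pow3_const_cube])
  also have "[:a ^ 3:] + monom 1 3 * p ^ 3 = [:a:] ^ 3 + (monom 1 1 * p) ^ 3"
    by (simp add: monom_power power_mult_distrib flip: poly_const_pow)
  also have "cong_pow3 m 1 \<dots> (pCons a p ^ 3)"
    unfolding x by (rule cong_pow3_sym[OF cong_pow3_cube_add])
  finally show ?case .
qed simp

lemma cong_pow3_dilate_pow3: "cong_pow3 m 1 (dilate (3 ^ j) p) (p ^ 3 ^ j)"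
proof (induction j)
  case (Suc j)
  have "dilate (3 ^ Suc j) p = dilate 3 (dilate (3 ^ j) p)"
    by (simp add: dilate_dilate mult.commute)
  also have "cong_pow3 m 1 \<dots> (dilate (3 ^ j) p ^ 3)"
    by (rule cong_pow3_dilate3)
  also have "cong_pow3 m 1 \<dots> ((p ^ 3 ^ j) ^ 3)"
    by (intro cong_pow3_power Suc.IH)
  also have "(p ^ 3 ^ j) ^ 3 = p ^ 3 ^ Suc j"
    by (simp add: power_mult[symmetric] mult.commute)
  finally show ?case .
qed simp

lemma cong_pow3_fermat:
  assumes "3 ^ N mod m = 1 mod m"
  shows "cong_pow3 m 1 (p ^ 3 ^ N) p"
proof -
  have "cong_pow3 m 1 (p ^ 3 ^ N) (dilate (3 ^ N) p)"
    by (rule cong_pow3_sym[OF cong_pow3_dilate_pow3])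
  also have "cong_pow3 m 1 \<dots> (dilate 1 p)"
    using assms by (intro cong_pow3_if_cong_cyc cong_cyc_dilate_exp)
  finally show ?thesis by simp
qed

section \<open>The multiplier theorem for the prime 3\<close>

lemma pow3_mult_mod_eq_1:
  fixes N j m :: nat
  assumes "3 ^ N mod m = 1 mod m"
  shows "3 ^ (N * j) mod m = 1 mod m"
proof -
  have "(3::nat) ^ (N * j) mod m = (3 ^ N mod m) ^ j mod m"
    by (simp add: power_mult power_mod)
  also have "\<dots> = 1 mod m"
    using assms by (simp add: power_mod[of 1, simplified])
  finally show ?thesis .
qed

text \<open>
  \<open>\<epsilon>\<close> is a \<open>3^(N j)\<close>-th power of \<open>A^(3^N - 1)\<close>, which is idempotent modulo
  \<open>(3, x^m - 1)\<close> by the Fermat congruence \<open>p^(3^N) = p\<close>.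
\<close>

lemma fermat_idempotent:
  fixes A :: "int poly" and j :: nat
  assumes "N > 0" "3 ^ N mod m = 1 mod m"
  defines "\<epsilon> \<equiv> A ^ ((3 ^ N - 1) * 3 ^ (N * j))"
  shows "cong_pow3 m 1 (A * \<epsilon>) A" and "cong_pow3 m j (dilate 3 \<epsilon>) \<epsilon>"
proof -
  define q :: nat where "q = 3 ^ N"
  define e where "e = A ^ (q - 1)"
  have "(3::nat) ^ 1 \<le> 3 ^ N"
    using assms(1) by (intro power_increasing) simp_all
  then have q: "q = Suc (Suc (q - 2))"
    unfolding q_def by simp
  have fermat: "cong_pow3 m 1 (x ^ 3 ^ (N * i)) x" for x i
    by (intro cong_pow3_fermat pow3_mult_mod_eq_1 assms(2))
  have eps: "\<epsilon> = e ^ 3 ^ (N * j)"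
    unfolding \<epsilon>_def e_def q_def by (simp add: power_mult)
  have Ae: "cong_pow3 m 1 (A * e) A"
  proof -
    have "Suc (q - 1) = q"
      using q by simp
    then have "A * e = A ^ 3 ^ (N * 1)"
      unfolding e_def q_def by (metis power_Suc mult_1_right)
    then show ?thesis
      using fermat[of A 1] by simp
  qed
  show "cong_pow3 m 1 (A * \<epsilon>) A"
    unfolding eps using cong_pow3_mult_left[OF fermat] Ae by (rule cong_pow3_trans)
  have ee: "cong_pow3 m 1 (e * e) e"
  proof -
    have e: "e = A * A ^ (q - 2)"
      unfolding e_def by (subst q) simp
    then have "e * e = (A * e) * A ^ (q - 2)"
      by (metis mult.assoc mult.commute)
    also have "cong_pow3 m 1 \<dots> (A * A ^ (q - 2))"
      by (rule cong_pow3_mult_right[OF Ae])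
    finally show ?thesis
      unfolding e[symmetric] .
  qed
  have "cong_pow3 m 1 (dilate 3 e) e"
  proof -
    have "dilate 3 e = dilate 3 A ^ (q - 1)"
      unfolding e_def by (rule dilate_power)
    also have "cong_pow3 m 1 \<dots> ((A ^ 3) ^ (q - 1))"
      by (intro cong_pow3_power cong_pow3_dilate3)
    also have "(A ^ 3) ^ (q - 1) = e * e * e"
      unfolding e_def by (simp only: power3_eq_cube power_mult_distrib)
    also have "cong_pow3 m 1 \<dots> (e * e)"
      using cong_pow3_mult_right[OF ee] .
    also note ee
    finally show ?thesis .
  qed
  then have "cong_pow3 m (Suc (N * j)) (dilate 3 e ^ 3 ^ (N * j)) (e ^ 3 ^ (N * j))"
    by (rule cong_pow3_pow3)
  then show "cong_pow3 m j (dilate 3 \<epsilon>) \<epsilon>"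
    unfolding eps dilate_power
    by (rule cong_pow3_mono[rotated]) (use assms(1) in \<open>cases N; simp\<close>)
qed

text \<open>
  Split \<open>A = A \<epsilon> + A (1 - \<epsilon>)\<close> with \<open>\<epsilon>\<close> as above: the first part is controlled by
  \<open>B \<epsilon>\<close>, a multiple of \<open>A B\<close>, and the second is divisible by 3, so that the induction
  hypothesis applies to its quotient.
\<close>

lemma cong_pow3_dilate3_mult_0:
  fixes A B :: "int poly"
  assumes "m > 0" "N > 0" "3 ^ N mod m = 1 mod m" "cong_pow3 m k (A * B) 0"
  shows "cong_pow3 m k (dilate 3 A * B) 0"
  using assms(4)
proof (induction k arbitrary: A B)
  case (Suc k)
  define \<epsilon> where "\<epsilon> = A ^ ((3 ^ N - 1) * 3 ^ (N * Suc k))"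
  have unit: "cong_pow3 m 1 (A * \<epsilon>) A" and fixed: "cong_pow3 m (Suc k) (dilate 3 \<epsilon>) \<epsilon>"
    unfolding \<epsilon>_def by (intro fermat_idempotent assms(2,3))+
  have B\<epsilon>: "cong_pow3 m (Suc k) (B * \<epsilon>) 0"
  proof -
    have "(3::nat) ^ N > 1"
      using assms(2) by (intro one_less_power) simp_all
    then obtain M where M: "\<epsilon> = A * A ^ M"
      unfolding \<epsilon>_def by (metis power_Suc Suc_pred' nat_0_less_mult_iff zero_less_diff
          zero_less_numeral zero_less_power)
    have "cong_pow3 m (Suc k) (A * B * A ^ M) 0"
      using cong_pow3_mult_right[OF Suc.prems, of "A ^ M"] by simp
    moreover have "B * \<epsilon> = A * B * A ^ M"
      unfolding M by (simp only: ac_simps)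
    ultimately show ?thesis
      by (simp only:)
  qed
  obtain A' where A': "cong_cyc m (A - A * \<epsilon>) (smult 3 A')"
    using cong_pow3_sym[OF unit] unfolding cong_pow3_def by auto
  have "cong_pow3 m k (A' * B) 0"
  proof (rule cong_pow3_smult3_cancel[OF assms(1)])
    have "cong_cyc m (smult 3 (A' * B)) (A * B - B * \<epsilon> * A)"
      using cong_cyc_mult_right[OF cong_cyc_sym[OF A'], of B] by (simp add: algebra_simps)
    then have "cong_pow3 m (Suc k) (smult 3 (A' * B)) (A * B - B * \<epsilon> * A)"
      by (rule cong_pow3_if_cong_cyc)
    also have "cong_pow3 m (Suc k) \<dots> (0 - 0 * A)"
      by (intro cong_pow3_diff cong_pow3_mult_right Suc.prems B\<epsilon>)
    finally show "cong_pow3 m (Suc k) (smult 3 (A' * B)) (smult 3 0)"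
      by simp
  qed
  then have IH: "cong_pow3 m k (dilate 3 A' * B) 0"
    by (rule Suc.IH)
  have "dilate 3 A * B
      = dilate 3 A * (B * \<epsilon>) + dilate 3 (A - A * \<epsilon>) * B + dilate 3 A * B * (dilate 3 \<epsilon> - \<epsilon>)"
    by (simp add: dilate_diff dilate_mult algebra_simps)
  also have "cong_cyc m \<dots>
      (dilate 3 A * (B * \<epsilon>) + smult 3 (dilate 3 A' * B) + dilate 3 A * B * (dilate 3 \<epsilon> - \<epsilon>))"
    using cong_cyc_mult_right[OF cong_cyc_dilate[OF A'], of 3 B]
    by (simp add: cong_cyc_add dilate_smult)
  finally have "cong_pow3 m (Suc k) (dilate 3 A * B)
      (dilate 3 A * (B * \<epsilon>) + smult 3 (dilate 3 A' * B) + dilate 3 A * B * (dilate 3 \<epsilon> - \<epsilon>))"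
    by (rule cong_pow3_if_cong_cyc)
  also have "cong_pow3 m (Suc k) \<dots> (dilate 3 A * 0 + smult 3 0 + dilate 3 A * B * 0)"
    using fixed by (intro cong_pow3_add cong_pow3_mult_left cong_pow3_smult3 B\<epsilon> IH)
                   (simp add: cong_pow3_diff_0_iff)
  finally show ?case
    by simp
qed simp

theorem multiplier_3:
  fixes E :: "int poly"
  assumes "m > 0" "N > 0" "3 ^ N mod m = 1 mod m" "cong_cyc m (cyc_norm m E) [:3 ^ k:]"
  shows "\<exists>s<m. cong_cyc m (dilate 3 E) (monom 1 s * E)"
proof -
  define Z where "Z = dilate 3 E * dilate (m - 1) E"
  have "cong_pow3 m k (E * dilate (m - 1) E) 0"
    using assms(4) unfolding cong_pow3_def cyc_norm_def
    by (intro exI[of _ 1]) (simp add: cong_cyc_def)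
  then have "cong_pow3 m k Z 0"
    unfolding Z_def by (rule cong_pow3_dilate3_mult_0[OF assms(1-3)])
  then obtain U where U: "cong_cyc m Z (smult (3 ^ k) U)"
    unfolding cong_pow3_def by auto
  have "cong_cyc m (cyc_norm m U) 1"
  proof (rule cong_cyc_smult_cancel[OF assms(1)])
    have "cong_cyc m (smult (3 ^ k * 3 ^ k) (cyc_norm m U)) (cyc_norm m Z)"
      using cong_cyc_sym[OF cong_cyc_cyc_norm[OF U]] by (simp add: cyc_norm_smult)
    also have "cyc_norm m Z = dilate 3 (cyc_norm m E) * dilate (m - 1) (cyc_norm m E)"
      unfolding Z_def cyc_norm_mult cyc_norm_dilate ..
    also have "cong_cyc m \<dots> (dilate 3 [:3 ^ k:] * dilate (m - 1) [:3 ^ k:])"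
      by (intro cong_cyc_mult cong_cyc_dilate assms(4))
    finally show "cong_cyc m (smult (3 ^ k * 3 ^ k) (cyc_norm m U)) (smult (3 ^ k * 3 ^ k) 1)"
      by simp
  qed simp
  then obtain \<sigma> s where \<sigma>: "\<sigma> = 1 \<or> \<sigma> = -1" "s < m" "cong_cyc m U (monom \<sigma> s)"
    using cyc_norm_one_imp_cong_cyc_monom[OF assms(1)] by blast
  have "cong_cyc m (dilate 3 E) (monom \<sigma> s * E)"
  proof (rule cong_cyc_smult_cancel[OF assms(1)])
    have "smult (3 ^ k) (dilate 3 E) = dilate 3 E * [:3 ^ k:]"
      by simp
    also have "cong_cyc m \<dots> (dilate 3 E * cyc_norm m E)"
      by (rule cong_cyc_mult_left[OF cong_cyc_sym[OF assms(4)]])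
    also have "dilate 3 E * cyc_norm m E = Z * E"
      by (simp add: Z_def cyc_norm_def ac_simps)
    also have "cong_cyc m \<dots> (smult (3 ^ k) (monom \<sigma> s) * E)"
      using cong_cyc_trans[OF U cong_cyc_smult[OF \<sigma>(3)]] by (rule cong_cyc_mult_right)
    finally show "cong_cyc m (smult (3 ^ k) (dilate 3 E)) (smult (3 ^ k) (monom \<sigma> s * E))"
      by simp
  qed simp
  moreover have "\<sigma> = 1"
  proof -
    have "poly E 1 * poly E 1 = 3 ^ k"
      using poly_1_eq_if_cong_cyc[OF assms(4)] by (simp add: poly_cyc_norm_1)
    moreover have "poly E 1 = \<sigma> * poly E 1"
      using poly_1_eq_if_cong_cyc[OF \<open>cong_cyc m (dilate 3 E) (monom \<sigma> s * E)\<close>]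
      by (simp add: poly_dilate_1 poly_monom)
    ultimately show ?thesis
      by (metis mult_cancel_right1 mult_eq_0_iff power_not_zero zero_neq_numeral)
  qed
  ultimately show ?thesis
    using \<sigma>(2) by blast
qed

lemma cong_cyc_dilate3_translate:
  assumes "(2 * c + s) mod m = 0" "cong_cyc m (dilate 3 E) (monom 1 s * E)"
  shows "cong_cyc m (dilate 3 (monom 1 c * E)) (monom 1 c * E)"
proof -
  have "dilate 3 (monom 1 c * E) = monom 1 (c * 3) * dilate 3 E"
    by (simp add: dilate_mult dilate_monom)
  also have "cong_cyc m \<dots> (monom 1 (c * 3) * (monom 1 s * E))"
    by (rule cong_cyc_mult_left[OF assms(2)])
  also have "\<dots> = monom 1 (c * 3 + s) * E"
    by (simp add: mult_monom mult.assoc[symmetric])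
  also have "cong_cyc m \<dots> (monom 1 c * E)"
  proof (intro cong_cyc_mult_right cong_cyc_monom_exp)
    have "c * 3 + s = (2 * c + s) + c"
      by simp
    then have "(c * 3 + s) mod m = ((2 * c + s) mod m + c) mod m"
      by (simp only: mod_add_left_eq)
    then show "(c * 3 + s) mod m = c mod m"
      using assms(1) by simp
  qed
  finally show ?thesis .
qed

lemma multiplier_3_invariant_rotation:
  fixes e :: "nat \<Rightarrow> int"
  assumes "odd m" "N > 0" "3 ^ N mod m = 1 mod m"
    and "cong_cyc m (cyc_norm m (poly_of_coeffs m e)) [:3 ^ k:]"
  obtains c where "cong_cyc m (dilate 3 (poly_of_coeffs m (\<lambda>j. e ((j + c) mod m))))
                               (poly_of_coeffs m (\<lambda>j. e ((j + c) mod m)))"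
    and "cong_cyc m (cyc_norm m (poly_of_coeffs m (\<lambda>j. e ((j + c) mod m)))) [:3 ^ k:]"
proof -
  let ?E = "poly_of_coeffs m e"
  have m: "m > 0"
    using assms(1) by (cases m) simp_all
  obtain s where s: "cong_cyc m (dilate 3 ?E) (monom 1 s * ?E)"
    using multiplier_3[OF m assms(2-4)] by blast
  define c where "c = (m - 1) div 2 * s mod m"
  have "(2 * c + s) mod m = 0"
  proof -
    have "(2 * c + s) mod m = (2 * ((m - 1) div 2) * s + s) mod m"
      unfolding c_def by (metis mod_add_left_eq mod_mult_right_eq mult.assoc)
    also have "2 * ((m - 1) div 2) * s + s = m * s"
      using assms(1) m by (simp add: algebra_simps)
    finally show ?thesis by simp
  qed
  then have fixed: "cong_cyc m (dilate 3 (monom 1 c * ?E)) (monom 1 c * ?E)"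
    using s by (rule cong_cyc_dilate3_translate)
  have "c < m"
    unfolding c_def using m by simp
  then have rot: "cong_cyc m (monom 1 c * ?E) (poly_of_coeffs m (\<lambda>j. e ((j + (m - c)) mod m)))"
    using m by (intro cong_cyc_rotate) simp_all
  show ?thesis
  proof
    show "cong_cyc m (dilate 3 (poly_of_coeffs m (\<lambda>j. e ((j + (m - c)) mod m))))
                     (poly_of_coeffs m (\<lambda>j. e ((j + (m - c)) mod m)))"
      using cong_cyc_dilate[OF cong_cyc_sym[OF rot]] fixed rot
      by (blast intro: cong_cyc_trans)
    have "cong_cyc m (cyc_norm m (poly_of_coeffs m (\<lambda>j. e ((j + (m - c)) mod m))))
                     (cyc_norm m (monom 1 c * ?E))"
      by (rule cong_cyc_cyc_norm[OF cong_cyc_sym[OF rot]])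
    also have "cong_cyc m \<dots> (cyc_norm m ?E)"
      by (rule cong_cyc_cyc_norm_translate[OF m])
    finally show "cong_cyc m (cyc_norm m (poly_of_coeffs m (\<lambda>j. e ((j + (m - c)) mod m)))) [:3 ^ k:]"
      using assms(4) by (rule cong_cyc_trans)
  qed
qed

section \<open>The case \<open>CW(154, 81)\<close>\<close>

lemma sum_squares_orbit_reps_77:
  fixes f :: "nat \<Rightarrow> int"
  assumes "\<forall>j<77. f (26 * j mod 77) = f j"
  shows "(\<Sum>l<77. f l * f l)
           = f 0 * f 0 + 6 * (f 11 * f 11) + 5 * (f 7 * f 7) + 5 * (f 14 * f 14)
             + 30 * (f 1 * f 1) + 30 * (f 2 * f 2)"
    and "(\<Sum>r<11. (\<Sum>t<7. f (r + t * 11)) * (\<Sum>t<7. f (r + t * 11)))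
           = (f 0 + 6 * f 11) * (f 0 + 6 * f 11) + 5 * ((6 * f 1 + f 14) * (6 * f 1 + f 14))
             + 5 * ((6 * f 2 + f 7) * (6 * f 2 + f 7))"
proof -
  \<comment> \<open>All instances except those landing on the orbit representatives 0, 1, 2, 7, 11, 14:
    oriented left to right they rewrite every index to its representative.\<close>
  have "\<forall>j::nat\<in>{1, 2, 4, 5, 7, 8, 9, 10, 11, 12, 13, 14, 15, 16, 17, 18, 19, 20, 22, 23, 24, 25,
      26, 27, 28, 29, 30, 31, 32, 34, 35, 36, 37, 38, 39, 40, 41, 43, 44, 45, 46, 47, 48, 49, 50,
      51, 52, 53, 54, 55, 56, 57, 58, 59, 60, 61, 62, 63, 64, 65, 66, 67, 68, 69, 70, 71, 72, 73,
      74, 75, 76}. f (26 * j mod 77) = f j"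
  proof
    fix j :: nat
    assume "j \<in> {1, 2, 4, 5, 7, 8, 9, 10, 11, 12, 13, 14, 15, 16, 17, 18, 19, 20, 22, 23, 24, 25,
      26, 27, 28, 29, 30, 31, 32, 34, 35, 36, 37, 38, 39, 40, 41, 43, 44, 45, 46, 47, 48, 49, 50,
      51, 52, 53, 54, 55, 56, 57, 58, 59, 60, 61, 62, 63, 64, 65, 66, 67, 68, 69, 70, 71, 72, 73,
      74, 75, 76}"
    then have "j < 77" by auto
    with assms show "f (26 * j mod 77) = f j" by blast
  qed
  note orbit = this[simplified]
  show "(\<Sum>l<77. f l * f l)
           = f 0 * f 0 + 6 * (f 11 * f 11) + 5 * (f 7 * f 7) + 5 * (f 14 * f 14)
             + 30 * (f 1 * f 1) + 30 * (f 2 * f 2)"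
    by (simp add: lessThan_nat_numeral orbit)
  show "(\<Sum>r<11. (\<Sum>t<7. f (r + t * 11)) * (\<Sum>t<7. f (r + t * 11)))
           = (f 0 + 6 * f 11) * (f 0 + 6 * f 11) + 5 * ((6 * f 1 + f 14) * (6 * f 1 + f 14))
             + 5 * ((6 * f 2 + f 7) * (6 * f 2 + f 7))"
    by (simp add: lessThan_nat_numeral orbit algebra_simps)
qed

lemma int_abs_le_2_cases: "\<bar>x :: int\<bar> \<le> 2 \<Longrightarrow> x = -2 \<or> x = -1 \<or> x = 0 \<or> x = 1 \<or> x = 2"
  by arith

lemma int_abs_le_2_square_le_4: "\<bar>x :: int\<bar> \<le> 2 \<Longrightarrow> x * x \<le> 4"
  using int_abs_le_2_cases[of x] by auto

lemma no_small_solution_orbit_equations: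
  fixes \<alpha> \<beta> \<gamma> c d x y :: int
  assumes "0 \<le> \<alpha>" "\<alpha> \<le> 4" "0 \<le> \<beta>" "\<beta> \<le> 4" "0 \<le> \<gamma>"
    and "\<bar>c\<bar> \<le> 2" "\<bar>d\<bar> \<le> 2" "\<bar>x\<bar> \<le> 2" "\<bar>y\<bar> \<le> 2"
    and "\<alpha> + 6 * \<beta> + 5 * (c * c) + 5 * (d * d) + 30 * (x * x) + 30 * (y * y) = 81"
    and "\<gamma> + 5 * ((6 * x + d) * (6 * x + d)) + 5 * ((6 * y + c) * (6 * y + c)) = 81"
  shows False
  using int_abs_le_2_cases[OF assms(6)] int_abs_le_2_cases[OF assms(7)]
    int_abs_le_2_cases[OF assms(8)] int_abs_le_2_cases[OF assms(9)] assms(1-5,10,11)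
  by (elim disjE) simp_all

lemma no_dilate3_invariant_77:
  fixes f :: "nat \<Rightarrow> int"
  assumes "\<forall>j<77. \<bar>f j\<bar> \<le> 2"
    and "cong_cyc 77 (dilate 3 (poly_of_coeffs 77 f)) (poly_of_coeffs 77 f)"
    and "cong_cyc 77 (cyc_norm 77 (poly_of_coeffs 77 f)) [:81:]"
  shows False
proof -
  have "\<forall>j<77. f (26 * j mod 77) = f j"
    using dilate_invariant_coeffs[of 77 3 26 f] assms(2) by simp
  moreover have "(\<Sum>l<77. f l * f l) = 81"
    using sum_squares_eq_if_cyc_norm_cong[of 77 f 81] assms(3) by simp
  moreover have "(\<Sum>r<11. (\<Sum>t<7. f (r + t * 11)) * (\<Sum>t<7. f (r + t * 11))) = 81"
    using sum_squares_eq_if_cyc_norm_cong[of 11 "\<lambda>r. \<Sum>t<7. f (r + t * 11)" 81]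
      cong_cyc_cyc_norm_modulus_dvd[of 11 77, OF _ _ _ assms(3) cong_cyc_fold[of 11 7, simplified]]
    by simp
  ultimately show False
    using no_small_solution_orbit_equations[of "f 0 * f 0" "f 11 * f 11"
        "(f 0 + 6 * f 11) * (f 0 + 6 * f 11)" "f 7" "f 14" "f 1" "f 2"] assms(1)
    by (simp add: sum_squares_orbit_reps_77 int_abs_le_2_square_le_4)
qed

theorem corollary1:
  shows "\<not> (\<exists>W. circulant_weighing_matrix 154 81 W)"
proof
  assume "\<exists>W. circulant_weighing_matrix 154 81 W"
  then obtain W where W: "circulant_weighing_matrix (2 * 77) 81 W"
    by auto
  define e where "e j = (\<Sum>t<2. W 0 (j + t * 77))" for j
  have e_norm: "cong_cyc 77 (cyc_norm 77 (poly_of_coeffs 77 e)) [:3 ^ 4:]"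
    and e_bound: "\<forall>j<77. \<bar>e j\<bar> \<le> 2"
    using circulant_weighing_matrix_fold[OF W] by (simp_all add: e_def[abs_def])
  obtain c where
    "cong_cyc 77 (dilate 3 (poly_of_coeffs 77 (\<lambda>j. e ((j + c) mod 77))))
                 (poly_of_coeffs 77 (\<lambda>j. e ((j + c) mod 77)))"
    "cong_cyc 77 (cyc_norm 77 (poly_of_coeffs 77 (\<lambda>j. e ((j + c) mod 77)))) [:3 ^ 4:]"
    by (rule multiplier_3_invariant_rotation[of 77 30 e 4]) (use e_norm in simp_all)
  then show False
    using e_bound by (intro no_dilate3_invariant_77[of "\<lambda>j. e ((j + c) mod 77)"]) simp_all
qed

end
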